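(* Let $f:\mathbb{R}^m\to\mathbb{R}\cup\{+\infty\}$ be a proper lower semicontinuous convex function and let $\bar x\in\mathbb{R}^m$ be such that $f(\bar x)=0$. Then the following are equivalent: (i) $\min_{\|h\|=1}f'(\bar x,h)\neq 0$; (ii) there exist constants $c,\varepsilon>0$ such that for every proper lower semicontinuous convex $g:\mathbb{R}^m\to\mathbb{R}\cup\{+\infty\}$ with $\bar x\in S_g$ and $$\limsup_{x\to\bar x}\frac{|(f(x)-g(x))-(f(\bar x)-g(\bar x))|}{\|x-\bar x\|}\le\varepsilon,$$ one has $\tau_{\min}(g,\bar x)\le c$; (iii) there exist constants $c,\varepsilon>0$ such that for all $u^*\in\mathbb{R}^m$ with $\|u^*\|\le1$, one has $\tau_{\min}(g_{u^*,\varepsilon},\bar x)\le c$, where $g_{u^*,\varepsilon}(x):=f(x)+\varepsilon\langle u^*,x-\bar x\rangle$ for all $x\in\mathbb{R}^m$.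
   Context: $\mathbb{R}^m$ carries the Euclidean norm, $B(\bar x,\delta)$ is the closed ball of radius $\delta$ around $\bar x$, and $d(x,D)=\inf\{\|x-y\|:y\in D\}$ (with $\inf\emptyset=+\infty$). $f'(\bar x,h):=\lim_{t\to0^+}\frac{f(\bar x+th)-f(\bar x)}{t}$ is the directional derivative. For a proper lsc convex $g$, $S_g:=\{x: g(x)\le0\}$ and the local error bound modulus at $\bar x$ is $\tau_{\min}(g,\bar x):=\inf\{\tau>0:\exists\delta>0 \text{ with } d(x,S_g)\le\tau[g(x)]_+\ \forall x\in B(\bar x,\delta)\}$, where $[t]_+=\max\{t,0\}$ and $\inf\emptyset=+\infty$. *)

theory Defs
  imports "HOL-Analysis.Analysis"
begin

(* Extended-real valued functions R^m -> R \<union> {+\<infinity>} are modelled as 'a \<Rightarrow> ereal;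
   "proper" excludes -\<infinity> and requires a finite value somewhere. *)

definition proper_fun :: "('a \<Rightarrow> ereal) \<Rightarrow> bool" where
  "proper_fun f \<longleftrightarrow> (\<forall>x. f x \<noteq> -\<infinity>) \<and> (\<exists>x. f x < \<infinity>)"

definition lsc_fun :: "('a::topological_space \<Rightarrow> ereal) \<Rightarrow> bool" where
  "lsc_fun f \<longleftrightarrow> (\<forall>x. f x \<le> Liminf (at x) f)"

definition convex_fun :: "('a::real_vector \<Rightarrow> ereal) \<Rightarrow> bool" where
  "convex_fun f \<longleftrightarrow> (\<forall>x y t. 0 < t \<and> t < 1 \<longrightarrow>
      f ((1 - t) *\<^sub>R x + t *\<^sub>R y) \<le> ereal (1 - t) * f x + ereal t * f y)"

definition plsc_convex :: "('a::real_normed_vector \<Rightarrow> ereal) \<Rightarrow> bool" where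
  "plsc_convex f \<longleftrightarrow> proper_fun f \<and> lsc_fun f \<and> convex_fun f"

definition dir_deriv :: "('a::real_normed_vector \<Rightarrow> ereal) \<Rightarrow> 'a \<Rightarrow> 'a \<Rightarrow> ereal" where
  "dir_deriv f xb h = Lim (at_right (0::real)) (\<lambda>t. (f (xb + t *\<^sub>R h) - f xb) / ereal t)"

definition Sset :: "('a \<Rightarrow> ereal) \<Rightarrow> 'a set" where
  "Sset g = {x. g x \<le> 0}"

definition edist_set :: "'a::metric_space \<Rightarrow> 'a set \<Rightarrow> ereal" where
  "edist_set x D = (if D = {} then \<infinity> else ereal (infdist x D))"

definition pos_part :: "ereal \<Rightarrow> ereal" where
  "pos_part t = max t 0"

definition tau_min :: "('a::euclidean_space \<Rightarrow> ereal) \<Rightarrow> 'a \<Rightarrow> ereal" where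
  "tau_min g xb = Inf {ereal \<tau> | \<tau>. \<tau> > 0 \<and> (\<exists>\<delta>>0. \<forall>x\<in>cball xb \<delta>.
       edist_set x (Sset g) \<le> ereal \<tau> * pos_part (g x))}"

definition ediff :: "ereal \<Rightarrow> ereal \<Rightarrow> ereal" where
  "ediff a b = (if a = \<infinity> \<and> b = \<infinity> then 0 else a - b)"

definition perturb_limsup :: "('a::real_normed_vector \<Rightarrow> ereal) \<Rightarrow> ('a \<Rightarrow> ereal) \<Rightarrow> 'a \<Rightarrow> ereal" where
  "perturb_limsup f g xb = Limsup (at xb)
     (\<lambda>x. \<bar>ediff (ediff (f x) (g x)) (ediff (f xb) (g xb))\<bar> / ereal (norm (x - xb)))"

end

theory Submission
  imports Defs
begin

(* For convex f with f xb = 0 the quotients f (xb + t h) / t increase in t, so f'(xb, h) is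
   their infimum over t > 0.  If f'(xb, .) > m > 0 on the unit sphere, f grows like
   m ||x - xb||, and every g that is m/2-close to f in the limsup sense still grows linearly
   off S_g near xb (or has g xb < 0, when convexity alone suffices).  If f'(xb, h) < -m for
   a unit h, every such g is below -(m/4) t on the ray xb + t h, and the convexity estimate
   d(x, S_g) <= ||x - z|| g(x) / (g(x) - g(z)) with z on the ray gives a uniform modulus.
   If the minimum is 0, then f >= 0, and for every theta > 0 some unit h has
   f(xb + t h) < theta t for small t; tilting f by a small multiple of <h, x - xb> keeps S_g
   inside the half-space <h, x - xb> <= 0, so d(xb + t h, S_g) >= t, while g(xb + t h) is only
   a small multiple of t: the moduli of the tilted functions are unbounded. *)

lemma convex_fun_ray_le:
  assumes "convex_fun f" and "f xb = 0" and "0 < s" "s < t"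
  shows "f (xb + s *\<^sub>R h) \<le> ereal (s / t) * f (xb + t *\<^sub>R h)"
proof -
  have "0 < s / t" "s / t < 1"
    using assms(3,4) by auto
  with assms(1) have "f ((1 - s / t) *\<^sub>R xb + (s / t) *\<^sub>R (xb + t *\<^sub>R h))
      \<le> ereal (1 - s / t) * f xb + ereal (s / t) * f (xb + t *\<^sub>R h)"
    unfolding convex_fun_def by blast
  moreover have "(1 - s / t) *\<^sub>R xb + (s / t) *\<^sub>R (xb + t *\<^sub>R h) = xb + s *\<^sub>R h"
    using assms(3,4) by (simp add: algebra_simps)
  ultimately show ?thesis
    using assms(2) by simp
qed

lemma convex_fun_difference_quotient_mono:
  assumes "convex_fun f" and "\<And>x. f x \<noteq> -\<infinity>" and "f xb = 0" and "0 < s" "s \<le> t"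
  shows "f (xb + s *\<^sub>R h) / ereal s \<le> f (xb + t *\<^sub>R h) / ereal t"
proof (cases "s = t")
  case False
  with assms(4,5) have "s < t" by simp
  with convex_fun_ray_le[OF assms(1,3,4)]
  have le: "f (xb + s *\<^sub>R h) \<le> ereal (s / t) * f (xb + t *\<^sub>R h)" .
  show ?thesis
  proof (cases "f (xb + t *\<^sub>R h)")
    case (real r)
    with le assms(2) obtain r' where r': "f (xb + s *\<^sub>R h) = ereal r'" "r' \<le> s / t * r"
      by (cases "f (xb + s *\<^sub>R h)") auto
    then have "r' / s \<le> r / t"
      using assms(4) \<open>s < t\<close> by (simp add: field_simps)
    with r' real assms(4) \<open>s < t\<close> show ?thesis by simp
  qed (use assms(2,4) \<open>s < t\<close> in auto)
qed simp

lemma convex_fun_difference_quotient_tendsto: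
  assumes "convex_fun f" and "\<And>x. f x \<noteq> -\<infinity>" and "f xb = 0"
  shows "((\<lambda>t. f (xb + t *\<^sub>R h) / ereal t) \<longlongrightarrow> (INF t\<in>{0<..}. f (xb + t *\<^sub>R h) / ereal t))
           (at_right 0)"
  using Lim_right_bound[of UNIV 0 "\<lambda>t. f (xb + t *\<^sub>R h) / ereal t" "-\<infinity>"]
    convex_fun_difference_quotient_mono[OF assms] by simp

lemma dir_deriv_eq_INF:
  assumes "convex_fun f" and "\<And>x. f x \<noteq> -\<infinity>" and "f xb = 0"
  shows "dir_deriv f xb h = (INF t\<in>{0<..}. f (xb + t *\<^sub>R h) / ereal t)"
  unfolding dir_deriv_def assms(3)
  by (simp add: tendsto_Lim convex_fun_difference_quotient_tendsto[OF assms])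

lemma dir_deriv_le_difference_quotient:
  assumes "convex_fun f" and "\<And>x. f x \<noteq> -\<infinity>" and "f xb = 0" and "0 < t"
  shows "dir_deriv f xb h \<le> f (xb + t *\<^sub>R h) / ereal t"
  unfolding dir_deriv_eq_INF[OF assms(1-3)] using assms(4) by (intro INF_lower) simp

lemma eventually_below_ray_if_dir_deriv_less:
  assumes "convex_fun f" and "\<And>x. f x \<noteq> -\<infinity>" and "f xb = 0"
    and "dir_deriv f xb h < ereal \<theta>"
  shows "\<forall>\<^sub>F t in at_right 0. f (xb + t *\<^sub>R h) < ereal (\<theta> * t)"
proof -
  have "\<forall>\<^sub>F t in at_right 0. f (xb + t *\<^sub>R h) / ereal t < ereal \<theta>"
    using convex_fun_difference_quotient_tendsto[OF assms(1-3)] assms(4)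
    unfolding dir_deriv_eq_INF[OF assms(1-3)] by (rule order_tendstoD)
  with eventually_at_right_less[of 0] show ?thesis
    by eventually_elim (simp add: ereal_divide_less_iff mult.commute)
qed

lemma convex_fun_ge_if_INF_dir_deriv_ge:
  fixes f :: "'a::real_normed_vector \<Rightarrow> ereal"
  assumes "convex_fun f" and "\<And>x. f x \<noteq> -\<infinity>" and "f xb = 0"
    and "ereal m \<le> (INF h\<in>{h. norm h = 1}. dir_deriv f xb h)"
  shows "ereal (m * norm (z - xb)) \<le> f z"
proof (cases "z = xb")
  case False
  define t where "t = norm (z - xb)"
  define h where "h = (1 / t) *\<^sub>R (z - xb)"
  have "0 < t" and "norm h = 1" and z: "z = xb + t *\<^sub>R h"
    using False by (simp_all add: t_def h_def)
  then have "ereal m \<le> dir_deriv f xb h"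
    using assms(4) by (metis (mono_tags) INF_lower mem_Collect_eq order_trans)
  also have "\<dots> \<le> f z / ereal t"
    unfolding z by (rule dir_deriv_le_difference_quotient[OF assms(1-3) \<open>0 < t\<close>])
  finally show ?thesis
    using \<open>0 < t\<close> by (simp add: ereal_le_divide_pos t_def mult.commute)
qed (simp add: assms(3))

lemma proper_fun_add_real:
  assumes "proper_fun f"
  shows "proper_fun (\<lambda>x. f x + ereal (l x))"
proof -
  from assms obtain x0 where "f x0 < \<infinity>" and "\<And>x. f x \<noteq> -\<infinity>"
    unfolding proper_fun_def by blast
  then have "f x0 + ereal (l x0) < \<infinity>"
    by (cases "f x0") auto
  with \<open>\<And>x. f x \<noteq> -\<infinity>\<close> show ?thesis
    unfolding proper_fun_def by auto
qed

lemma lsc_fun_add_continuous: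
  assumes "lsc_fun f" and "\<And>x. isCont l x"
  shows "lsc_fun (\<lambda>x. f x + ereal (l x))"
  unfolding lsc_fun_def le_Liminf_iff
proof (intro allI impI)
  fix x y assume "y < f x + ereal (l x)"
  then obtain w where w: "y < ereal w" "ereal w < f x + ereal (l x)"
    using ereal_dense2 by blast
  then have "ereal (w - l x) < f x"
    by (cases "f x") auto
  then obtain v where v: "w - l x < v" "ereal v < f x"
    using ereal_dense2 by force
  have "\<forall>\<^sub>F z in at x. ereal v < f z"
    using assms(1) v(2) unfolding lsc_fun_def le_Liminf_iff by blast
  moreover have "\<forall>\<^sub>F z in at x. w - v < l z"
    using order_tendstoD(1)[OF assms(2)[unfolded isCont_def], of "w - v"] v(1) by simp
  ultimately show "\<forall>\<^sub>F z in at x. y < f z + ereal (l z)"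
  proof eventually_elim
    case (elim z)
    then have "ereal w < f z + ereal (l z)"
      by (cases "f z") auto
    with w(1) show ?case by simp
  qed
qed

lemma convex_fun_add_affine:
  assumes "convex_fun f" and "\<And>x y t. l ((1 - t) *\<^sub>R x + t *\<^sub>R y) = (1 - t) * l x + t * l y"
  shows "convex_fun (\<lambda>x. f x + ereal (l x))"
  unfolding convex_fun_def
proof (intro allI impI)
  fix x y and t :: real assume t: "0 < t \<and> t < 1"
  have "f ((1 - t) *\<^sub>R x + t *\<^sub>R y) + ereal (l ((1 - t) *\<^sub>R x + t *\<^sub>R y))
      \<le> ereal (1 - t) * f x + ereal t * f y + ereal ((1 - t) * l x + t * l y)"
    unfolding assms(2) using assms(1) t unfolding convex_fun_def by (intro add_right_mono) blast
  also have "\<dots> = (ereal (1 - t) * f x + ereal ((1 - t) * l x)) + (ereal t * f y + ereal (t * l y))"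
    by (simp only: plus_ereal.simps(1)[symmetric] add_ac)
  also have "\<dots> = ereal (1 - t) * (f x + ereal (l x)) + ereal t * (f y + ereal (l y))"
    by (simp add: ereal_distrib_left)
  finally show "f ((1 - t) *\<^sub>R x + t *\<^sub>R y) + ereal (l ((1 - t) *\<^sub>R x + t *\<^sub>R y))
      \<le> ereal (1 - t) * (f x + ereal (l x)) + ereal t * (f y + ereal (l y))" .
qed

lemma plsc_convex_add_affine:
  assumes "plsc_convex f" and "\<And>x. isCont l x"
    and "\<And>x y t. l ((1 - t) *\<^sub>R x + t *\<^sub>R y) = (1 - t) * l x + t * l y"
  shows "plsc_convex (\<lambda>x. f x + ereal (l x))"
  using assms proper_fun_add_real lsc_fun_add_continuous convex_fun_add_affine
  unfolding plsc_convex_def by blast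

lemma infdist_Sset_le_Slater:
  assumes "convex_fun g" and "g x = ereal \<alpha>" "0 < \<alpha>" and "g z = ereal \<beta>" "\<beta> < 0"
  shows "infdist x (Sset g) \<le> norm (x - z) * \<alpha> / (\<alpha> - \<beta>)"
proof -
  define s where "s = \<alpha> / (\<alpha> - \<beta>)"
  have s: "0 < s" "s < 1"
    using assms(3,5) by (auto simp: s_def field_simps)
  define w where "w = (1 - s) *\<^sub>R x + s *\<^sub>R z"
  have "g w \<le> ereal (1 - s) * g x + ereal s * g z"
    using assms(1) s unfolding convex_fun_def w_def by blast
  also have "\<dots> = ereal ((1 - s) * \<alpha> + s * \<beta>)"
    using assms(2,4) by simp
  also have "(1 - s) * \<alpha> + s * \<beta> = 0"
    using assms(3,5) unfolding s_def by (simp add: field_simps)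
  finally have "w \<in> Sset g"
    by (simp add: Sset_def zero_ereal_def)
  then have "infdist x (Sset g) \<le> dist x w"
    by (rule infdist_le)
  also have "dist x w = s * norm (x - z)"
    using s unfolding w_def dist_norm by (simp add: algebra_simps flip: scaleR_diff_right)
  finally show ?thesis
    unfolding s_def by (simp add: field_simps)
qed

lemma tau_min_leI:
  assumes "xb \<in> Sset g" and "0 < c" "0 < \<delta>" and "\<And>x. g x \<noteq> -\<infinity>"
    and "\<And>x \<alpha>. x \<in> cball xb \<delta> \<Longrightarrow> g x = ereal \<alpha> \<Longrightarrow> 0 < \<alpha> \<Longrightarrow> infdist x (Sset g) \<le> c * \<alpha>"
  shows "tau_min g xb \<le> ereal c"
  unfolding tau_min_def
proof (rule Inf_lower, intro CollectI exI conjI ballI)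
  fix x assume x: "x \<in> cball xb \<delta>"
  have "Sset g \<noteq> {}"
    using assms(1) by blast
  then show "edist_set x (Sset g) \<le> ereal c * pos_part (g x)"
  proof (cases "g x")
    case (real \<alpha>)
    show ?thesis
    proof (cases "0 < \<alpha>")
      case False
      with real have "x \<in> Sset g"
        by (simp add: Sset_def)
      with real False show ?thesis
        by (auto simp: edist_set_def pos_part_def max_def)
    qed (use assms(5)[OF x real] \<open>Sset g \<noteq> {}\<close> real in \<open>simp add: edist_set_def pos_part_def\<close>)
  qed (use assms(2,4) in \<open>simp_all add: edist_set_def pos_part_def\<close>)
qed (use assms(2,3) in auto)

lemma tau_min_geI:
  assumes "Sset g \<noteq> {}"
    and "\<And>\<delta>. 0 < \<delta> \<Longrightarrow> \<exists>x\<in>cball xb \<delta>. \<exists>\<alpha>>0. g x = ereal \<alpha> \<and> c * \<alpha> \<le> infdist x (Sset g)"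
  shows "ereal c \<le> tau_min g xb"
  unfolding tau_min_def
proof (rule Inf_greatest, clarify)
  fix \<tau> \<delta> :: real
  assume "0 < \<delta>" and bound: "\<forall>x\<in>cball xb \<delta>. edist_set x (Sset g) \<le> ereal \<tau> * pos_part (g x)"
  then obtain x \<alpha> where x: "x \<in> cball xb \<delta>" and "0 < \<alpha>" "g x = ereal \<alpha>"
    and lower: "c * \<alpha> \<le> infdist x (Sset g)"
    using assms(2) by blast
  with bound assms(1) have "infdist x (Sset g) \<le> \<tau> * \<alpha>"
    by (force simp: edist_set_def pos_part_def max_def)
  with lower have "c * \<alpha> \<le> \<tau> * \<alpha>"
    by linarith
  with \<open>0 < \<alpha>\<close> show "ereal c \<le> ereal \<tau>"
    by simp
qed

lemma inner_le_infdist_if_halfspace: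
  fixes h :: "'a::real_inner"
  assumes "S \<noteq> {}" and "norm h \<le> 1" and "\<And>y. y \<in> S \<Longrightarrow> h \<bullet> (y - xb) \<le> 0"
  shows "h \<bullet> (x - xb) \<le> infdist x S"
  unfolding infdist_notempty[OF assms(1)]
proof (rule cINF_greatest[OF assms(1)])
  fix y assume "y \<in> S"
  have "h \<bullet> (x - xb) \<le> h \<bullet> (x - xb) - h \<bullet> (y - xb)"
    using assms(3)[OF \<open>y \<in> S\<close>] by simp
  also have "\<dots> = h \<bullet> (x - y)"
    by (simp add: inner_diff_right)
  also have "\<dots> \<le> norm h * norm (x - y)"
    by (rule norm_cauchy_schwarz)
  also have "\<dots> \<le> dist x y"
    using assms(2) by (simp add: dist_norm mult_left_le_one_le)
  finally show "h \<bullet> (x - xb) \<le> dist x y" .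
qed

lemma eventually_perturb_limsup_less:
  fixes f g :: "'a::real_normed_vector \<Rightarrow> ereal"
  assumes "perturb_limsup f g xb < ereal e" and "f xb = ereal p" "g xb = ereal q"
    and "\<And>x. f x \<noteq> -\<infinity>" "\<And>x. g x \<noteq> -\<infinity>"
  shows "\<forall>\<^sub>F x in at xb. (f x = \<infinity> \<and> g x = \<infinity>) \<or>
           (\<exists>a b. f x = ereal a \<and> g x = ereal b \<and> \<bar>(a - b) - (p - q)\<bar> < e * norm (x - xb))"
proof -
  have "\<forall>\<^sub>F x in at xb.
      \<bar>ediff (ediff (f x) (g x)) (ediff (f xb) (g xb))\<bar> / ereal (norm (x - xb)) < ereal e"
    using assms(1) unfolding perturb_limsup_def by (rule Limsup_lessD)
  with eventually_neq_at_within[of xb xb UNIV] show ?thesis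
  proof eventually_elim
    case (elim x)
    then have "0 < norm (x - xb)"
      by simp
    with elim assms(2-5) show ?case
      by (cases "f x"; cases "g x") (auto simp: ediff_def field_simps)
  qed
qed

lemma perturb_limsup_add_linear_le:
  fixes f :: "'a::real_inner \<Rightarrow> ereal"
  assumes "\<And>x. f x \<noteq> -\<infinity>" and "0 \<le> \<epsilon>" and "norm u \<le> 1"
  shows "perturb_limsup f (\<lambda>x. f x + ereal (\<epsilon> * (u \<bullet> (x - xb)))) xb \<le> ereal \<epsilon>"
  unfolding perturb_limsup_def
proof (rule Limsup_bounded)
  show "\<forall>\<^sub>F x in at xb. \<bar>ediff (ediff (f x) (f x + ereal (\<epsilon> * (u \<bullet> (x - xb)))))
      (ediff (f xb) (f xb + ereal (\<epsilon> * (u \<bullet> (xb - xb)))))\<bar> / ereal (norm (x - xb)) \<le> ereal \<epsilon>"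
    using eventually_neq_at_within[of xb xb UNIV]
  proof eventually_elim
    case (elim x)
    have "\<bar>u \<bullet> (x - xb)\<bar> \<le> norm (x - xb)"
      using Cauchy_Schwarz_ineq2[of u "x - xb"] assms(3)
      by (meson mult_left_le_one_le norm_ge_zero order_trans)
    then have "\<bar>\<epsilon> * (u \<bullet> (x - xb))\<bar> \<le> \<epsilon> * norm (x - xb)"
      using assms(2) by (simp add: abs_mult mult_left_mono)
    with elim assms show ?case
      by (cases "f x"; cases "f xb") (auto simp: ediff_def field_simps)
  qed
qed

lemma tau_min_le_if_sharp_growth:
  fixes f g :: "'a::euclidean_space \<Rightarrow> ereal"
  assumes "f xb = 0" and growth: "\<And>x. ereal (m * norm (x - xb)) \<le> f x"
    and "convex_fun g" and "\<And>x. g x \<noteq> -\<infinity>" and "xb \<in> Sset g"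
    and "perturb_limsup f g xb < ereal e" and "e < m"
  shows "tau_min g xb \<le> ereal (1 / (m - e))"
proof -
  obtain b where b: "g xb = ereal b" "b \<le> 0"
    using assms(4,5) by (cases "g xb") (auto simp: Sset_def)
  have "0 < 1 / (m - e)"
    using assms(7) by simp
  show ?thesis
  proof (cases "b < 0")
    case True
    define \<delta> where "\<delta> = - b / (m - e)"
    have "0 < \<delta>"
      using True assms(7) by (simp add: \<delta>_def divide_neg_pos)
    show ?thesis
    proof (rule tau_min_leI[OF assms(5) \<open>0 < 1 / (m - e)\<close> \<open>0 < \<delta>\<close> assms(4)])
      fix x \<alpha> assume x: "x \<in> cball xb \<delta>" and "g x = ereal \<alpha>" "0 < \<alpha>"
      have "infdist x (Sset g) \<le> norm (x - xb) * \<alpha> / (\<alpha> - b)"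
        by (rule infdist_Sset_le_Slater[OF assms(3) \<open>g x = ereal \<alpha>\<close> \<open>0 < \<alpha>\<close> b(1) True])
      also have "\<dots> \<le> \<delta> * \<alpha> / (- b)"
        using x \<open>0 < \<alpha>\<close> \<open>0 < \<delta>\<close> True
        by (intro frac_le mult_right_mono) (auto simp: dist_norm norm_minus_commute)
      also have "\<dots> = 1 / (m - e) * \<alpha>"
        using True by (simp add: \<delta>_def)
      finally show "infdist x (Sset g) \<le> 1 / (m - e) * \<alpha>" .
    qed
  next
    case False
    with b have "g xb = 0"
      by (simp add: zero_ereal_def)
    have f_not_MInfty: "f x \<noteq> -\<infinity>" for x
      using growth[of x] by auto
    have "f xb = ereal 0" "g xb = ereal 0"
      using assms(1) \<open>g xb = 0\<close> by (simp_all add: zero_ereal_def)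
    from eventually_perturb_limsup_less[OF assms(6) this f_not_MInfty assms(4)]
    obtain r where "0 < r" and near: "\<And>x. x \<noteq> xb \<Longrightarrow> dist x xb < r \<Longrightarrow>
        (f x = \<infinity> \<and> g x = \<infinity>) \<or> (\<exists>a c. f x = ereal a \<and> g x = ereal c \<and> \<bar>a - c\<bar> < e * norm (x - xb))"
      unfolding eventually_at by auto
    show ?thesis
    proof (rule tau_min_leI[OF assms(5) \<open>0 < 1 / (m - e)\<close> half_gt_zero[OF \<open>0 < r\<close>] assms(4)])
      fix x \<alpha> assume x: "x \<in> cball xb (r / 2)" and "g x = ereal \<alpha>" "0 < \<alpha>"
      then have "x \<noteq> xb"
        using \<open>g xb = 0\<close> by auto
      with near[of x] x \<open>0 < r\<close> \<open>g x = ereal \<alpha>\<close> obtain a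
        where "f x = ereal a" "\<bar>a - \<alpha>\<bar> < e * norm (x - xb)"
        by (auto simp: dist_commute)
      moreover have "m * norm (x - xb) \<le> a"
        using growth[of x] \<open>f x = ereal a\<close> by simp
      ultimately have "(m - e) * norm (x - xb) \<le> \<alpha>"
        by (simp add: left_diff_distrib)
      then have "norm (x - xb) \<le> 1 / (m - e) * \<alpha>"
        using assms(7) by (simp add: field_simps)
      then show "infdist x (Sset g) \<le> 1 / (m - e) * \<alpha>"
        using infdist_le[OF assms(5), of x] by (simp add: dist_norm)
    qed
  qed
qed

lemma tau_min_le_if_descent_direction:
  fixes f g :: "'a::euclidean_space \<Rightarrow> ereal"
  assumes "f xb = 0" and "\<And>x. f x \<noteq> -\<infinity>" and "norm h = 1"
    and descent: "\<forall>\<^sub>F t in at_right 0. f (xb + t *\<^sub>R h) < ereal (- m * t)"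
    and "convex_fun g" and "\<And>x. g x \<noteq> -\<infinity>" and "xb \<in> Sset g"
    and "perturb_limsup f g xb < ereal e" and "e < m"
  shows "tau_min g xb \<le> ereal (2 / (m - e))"
proof -
  obtain b where b: "g xb = ereal b" "b \<le> 0"
    using assms(6,7) by (cases "g xb") (auto simp: Sset_def)
  have "f xb = ereal 0"
    using assms(1) by (simp add: zero_ereal_def)
  from eventually_perturb_limsup_less[OF assms(8) this b(1) assms(2,6)]
  obtain r where "0 < r" and near: "\<And>x. x \<noteq> xb \<Longrightarrow> dist x xb < r \<Longrightarrow>
      (f x = \<infinity> \<and> g x = \<infinity>) \<or> (\<exists>a c. f x = ereal a \<and> g x = ereal c \<and> \<bar>a - c + b\<bar> < e * norm (x - xb))"
    unfolding eventually_at by auto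
  from descent obtain t0 where "0 < t0"
    and below: "\<And>t. 0 < t \<Longrightarrow> t < t0 \<Longrightarrow> f (xb + t *\<^sub>R h) < ereal (- m * t)"
    unfolding eventually_at_right_field by auto
  define \<delta> where "\<delta> = min t0 r / 2"
  have "0 < \<delta>" "\<delta> < t0" "\<delta> < r"
    using \<open>0 < t0\<close> \<open>0 < r\<close> by (auto simp: \<delta>_def)
  have "0 < 2 / (m - e)"
    using assms(9) by simp
  show ?thesis
  proof (rule tau_min_leI[OF assms(7) \<open>0 < 2 / (m - e)\<close> \<open>0 < \<delta>\<close> assms(6)])
    fix x \<alpha> assume x: "x \<in> cball xb \<delta>" and "g x = ereal \<alpha>" "0 < \<alpha>"
    define t where "t = norm (x - xb)"
    define z where "z = xb + t *\<^sub>R h"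
    have "x \<noteq> xb"
      using b \<open>g x = ereal \<alpha>\<close> \<open>0 < \<alpha>\<close> by auto
    then have "0 < t" "t \<le> \<delta>"
      using x by (auto simp: t_def dist_norm norm_minus_commute)
    have "norm (z - xb) = t"
      using assms(3) \<open>0 < t\<close> by (simp add: z_def)
    have "f z < ereal (- m * t)"
      unfolding z_def using below \<open>0 < t\<close> \<open>t \<le> \<delta>\<close> \<open>\<delta> < t0\<close> by simp
    with near[of z] obtain a c where "f z = ereal a" "g z = ereal c" "\<bar>a - c + b\<bar> < e * t"
      using \<open>norm (z - xb) = t\<close> \<open>0 < t\<close> \<open>t \<le> \<delta>\<close> \<open>\<delta> < r\<close> by (force simp: dist_norm)
    with \<open>f z < ereal (- m * t)\<close> b(2) have "(m - e) * t < - c"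
      by (simp add: left_diff_distrib)
    moreover have "0 < (m - e) * t"
      using assms(9) \<open>0 < t\<close> by simp
    ultimately have "infdist x (Sset g) \<le> norm (x - z) * \<alpha> / (\<alpha> - c)"
      using infdist_Sset_le_Slater[OF assms(5) \<open>g x = ereal \<alpha>\<close> \<open>0 < \<alpha>\<close> \<open>g z = ereal c\<close>] by simp
    also have "\<dots> \<le> (2 * t) * \<alpha> / ((m - e) * t)"
    proof (rule frac_le)
      have "norm (x - z) \<le> norm (x - xb) + norm (z - xb)"
        using norm_triangle_ineq4[of "x - xb" "z - xb"] by simp
      then show "norm (x - z) * \<alpha> \<le> 2 * t * \<alpha>"
        using \<open>0 < \<alpha>\<close> \<open>norm (z - xb) = t\<close> by (simp add: t_def)
    qed (use \<open>0 < \<alpha>\<close> \<open>0 < t\<close> \<open>(m - e) * t < - c\<close> \<open>0 < (m - e) * t\<close> in simp_all)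
    also have "\<dots> = 2 / (m - e) * \<alpha>"
      using \<open>0 < t\<close> by simp
    finally show "infdist x (Sset g) \<le> 2 / (m - e) * \<alpha>" .
  qed
qed

lemma tau_min_tilted_ge:
  fixes f :: "'a::euclidean_space \<Rightarrow> ereal"
  assumes "f xb = 0" and nonneg: "\<And>x. 0 \<le> f x" and "norm h = 1" and "0 < \<epsilon>" "0 < \<eta>"
    and flat: "\<forall>\<^sub>F t in at_right 0. f (xb + t *\<^sub>R h) < ereal (\<theta> * t)"
  shows "ereal (1 / (\<theta> + \<epsilon> * \<eta>)) \<le> tau_min (\<lambda>x. f x + ereal (\<epsilon> * ((\<eta> *\<^sub>R h) \<bullet> (x - xb)))) xb"
    (is "_ \<le> tau_min ?g xb")
proof (rule tau_min_geI)
  have "xb \<in> Sset ?g"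
    using assms(1) by (simp add: Sset_def)
  then show "Sset ?g \<noteq> {}"
    by blast
  have halfspace: "h \<bullet> (y - xb) \<le> 0" if "y \<in> Sset ?g" for y
  proof -
    obtain r where "f y = ereal r" "0 \<le> r"
      using nonneg[of y] \<open>y \<in> Sset ?g\<close> by (cases "f y") (auto simp: Sset_def)
    with \<open>y \<in> Sset ?g\<close> have "\<epsilon> * \<eta> * (h \<bullet> (y - xb)) \<le> 0"
      by (simp add: Sset_def zero_ereal_def mult.assoc)
    with \<open>0 < \<epsilon>\<close> \<open>0 < \<eta>\<close> show ?thesis
      by (simp add: mult_le_0_iff)
  qed
  fix \<delta> :: real assume "0 < \<delta>"
  from flat obtain t0 where "0 < t0"
    and below: "\<And>t. 0 < t \<Longrightarrow> t < t0 \<Longrightarrow> f (xb + t *\<^sub>R h) < ereal (\<theta> * t)"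
    unfolding eventually_at_right_field by auto
  define t where "t = min (t0 / 2) \<delta>"
  define x where "x = xb + t *\<^sub>R h"
  have "0 < t" "t < t0" "t \<le> \<delta>"
    using \<open>0 < t0\<close> \<open>0 < \<delta>\<close> by (auto simp: t_def)
  obtain r where "f x = ereal r" "0 \<le> r" "r < \<theta> * t"
    using below[OF \<open>0 < t\<close> \<open>t < t0\<close>] nonneg[of x] unfolding x_def[symmetric] by (cases "f x") auto
  define \<alpha> where "\<alpha> = r + \<epsilon> * \<eta> * t"
  show "\<exists>x\<in>cball xb \<delta>. \<exists>\<alpha>>0. ?g x = ereal \<alpha> \<and> 1 / (\<theta> + \<epsilon> * \<eta>) * \<alpha> \<le> infdist x (Sset ?g)"
  proof (intro bexI exI conjI)
    show "x \<in> cball xb \<delta>"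
      using \<open>norm h = 1\<close> \<open>0 < t\<close> \<open>t \<le> \<delta>\<close> by (simp add: x_def dist_norm)
    show "0 < \<alpha>"
      using \<open>0 \<le> r\<close> \<open>0 < \<epsilon>\<close> \<open>0 < \<eta>\<close> \<open>0 < t\<close> by (simp add: \<alpha>_def add_nonneg_pos)
    show "?g x = ereal \<alpha>"
      using \<open>f x = ereal r\<close> \<open>norm h = 1\<close>
      by (simp add: x_def \<alpha>_def inner_commute power2_norm_eq_inner[symmetric] algebra_simps)
    have "\<alpha> < (\<theta> + \<epsilon> * \<eta>) * t"
      using \<open>r < \<theta> * t\<close> by (simp add: \<alpha>_def algebra_simps)
    moreover have "0 < \<theta> + \<epsilon> * \<eta>"
      using \<open>0 \<le> r\<close> \<open>r < \<theta> * t\<close> \<open>0 < t\<close> \<open>0 < \<epsilon>\<close> \<open>0 < \<eta>\<close>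
      by (smt (verit) mult_pos_pos zero_less_mult_pos2)
    moreover have "t \<le> infdist x (Sset ?g)"
      using inner_le_infdist_if_halfspace[OF \<open>Sset ?g \<noteq> {}\<close> _ halfspace, of x] \<open>norm h = 1\<close>
      by (simp add: x_def power2_norm_eq_inner[symmetric])
    ultimately have "\<alpha> \<le> (\<theta> + \<epsilon> * \<eta>) * infdist x (Sset ?g)"
      by (smt (verit) mult_left_mono)
    with \<open>0 < \<theta> + \<epsilon> * \<eta>\<close> show "1 / (\<theta> + \<epsilon> * \<eta>) * \<alpha> \<le> infdist x (Sset ?g)"
      by (simp add: field_simps)
  qed
qed

definition stable_error_bound :: "('a::euclidean_space \<Rightarrow> ereal) \<Rightarrow> 'a \<Rightarrow> bool" where
  "stable_error_bound f xb \<longleftrightarrow> (\<exists>c>0. \<exists>\<epsilon>>0. \<forall>g. plsc_convex g \<and> xb \<in> Sset g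
     \<and> perturb_limsup f g xb \<le> ereal \<epsilon> \<longrightarrow> tau_min g xb \<le> ereal c)"

definition linearly_stable_error_bound :: "('a::euclidean_space \<Rightarrow> ereal) \<Rightarrow> 'a \<Rightarrow> bool" where
  "linearly_stable_error_bound f xb \<longleftrightarrow> (\<exists>c>0. \<exists>\<epsilon>>0. \<forall>u::'a. norm u \<le> 1 \<longrightarrow>
     tau_min (\<lambda>x. f x + ereal (\<epsilon> * (u \<bullet> (x - xb)))) xb \<le> ereal c)"

lemma stable_error_bound_if_INF_dir_deriv_pos:
  fixes f :: "'a::euclidean_space \<Rightarrow> ereal"
  assumes "convex_fun f" and "\<And>x. f x \<noteq> -\<infinity>" and "f xb = 0"
    and "0 < (INF h\<in>{h. norm h = 1}. dir_deriv f xb h)"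
  shows "stable_error_bound f xb"
proof -
  obtain m where "0 < ereal m" and m: "ereal m < (INF h\<in>{h. norm h = 1}. dir_deriv f xb h)"
    using ereal_dense2[OF assms(4)] by blast
  then have "0 < m"
    by simp
  have growth: "ereal (m * norm (x - xb)) \<le> f x" for x
    using m by (intro convex_fun_ge_if_INF_dir_deriv_ge[OF assms(1-3)] less_imp_le)
  show ?thesis
    unfolding stable_error_bound_def
  proof (intro exI conjI allI impI)
    fix g assume g: "plsc_convex g \<and> xb \<in> Sset g \<and> perturb_limsup f g xb \<le> ereal (m / 2)"
    then have "perturb_limsup f g xb < ereal (3 * m / 4)"
      using \<open>0 < m\<close> by (auto elim: order.strict_trans1)
    with g tau_min_le_if_sharp_growth[OF assms(3) growth, of g "3 * m / 4"] \<open>0 < m\<close>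
    show "tau_min g xb \<le> ereal (4 / m)"
      unfolding plsc_convex_def proper_fun_def by simp
  qed (use \<open>0 < m\<close> in auto)
qed

lemma stable_error_bound_if_INF_dir_deriv_neg:
  fixes f :: "'a::euclidean_space \<Rightarrow> ereal"
  assumes "convex_fun f" and "\<And>x. f x \<noteq> -\<infinity>" and "f xb = 0"
    and "(INF h\<in>{h. norm h = 1}. dir_deriv f xb h) < 0"
  shows "stable_error_bound f xb"
proof -
  obtain h where "norm h = 1" and "dir_deriv f xb h < 0"
    using assms(4) by (auto simp: INF_less_iff)
  then obtain y where "dir_deriv f xb h < ereal y" and "ereal y < 0"
    using ereal_dense2 by blast
  define m where "m = - y"
  then have "0 < m" and "dir_deriv f xb h < ereal (- m)"
    using \<open>ereal y < 0\<close> \<open>dir_deriv f xb h < ereal y\<close> by simp_all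
  have descent: "\<forall>\<^sub>F t in at_right 0. f (xb + t *\<^sub>R h) < ereal (- m * t)"
    using \<open>dir_deriv f xb h < ereal (- m)\<close> by (rule eventually_below_ray_if_dir_deriv_less[OF assms(1-3)])
  show ?thesis
    unfolding stable_error_bound_def
  proof (intro exI conjI allI impI)
    fix g assume g: "plsc_convex g \<and> xb \<in> Sset g \<and> perturb_limsup f g xb \<le> ereal (m / 2)"
    then have "perturb_limsup f g xb < ereal (3 * m / 4)"
      using \<open>0 < m\<close> by (auto elim: order.strict_trans1)
    with g tau_min_le_if_descent_direction[OF assms(3,2) \<open>norm h = 1\<close> descent, of g "3 * m / 4"] \<open>0 < m\<close>
    show "tau_min g xb \<le> ereal (8 / m)"
      unfolding plsc_convex_def proper_fun_def by simp
  qed (use \<open>0 < m\<close> in auto)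
qed

lemma linearly_stable_error_bound_if_stable:
  fixes f :: "'a::euclidean_space \<Rightarrow> ereal"
  assumes "plsc_convex f" and "f xb = 0" and "stable_error_bound f xb"
  shows "linearly_stable_error_bound f xb"
proof -
  obtain c \<epsilon> where "0 < c" "0 < \<epsilon>" and stable: "\<And>g. plsc_convex g \<Longrightarrow> xb \<in> Sset g \<Longrightarrow>
      perturb_limsup f g xb \<le> ereal \<epsilon> \<Longrightarrow> tau_min g xb \<le> ereal c"
    using assms(3) unfolding stable_error_bound_def by blast
  have "tau_min (\<lambda>x. f x + ereal (\<epsilon> * (u \<bullet> (x - xb)))) xb \<le> ereal c" if "norm u \<le> 1" for u :: 'a
  proof (rule stable)
    show "plsc_convex (\<lambda>x. f x + ereal (\<epsilon> * (u \<bullet> (x - xb))))"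
      by (rule plsc_convex_add_affine[OF assms(1)])
        (auto intro!: continuous_intros simp: algebra_simps inner_diff_right)
    show "xb \<in> Sset (\<lambda>x. f x + ereal (\<epsilon> * (u \<bullet> (x - xb))))"
      using assms(2) by (simp add: Sset_def)
    show "perturb_limsup f (\<lambda>x. f x + ereal (\<epsilon> * (u \<bullet> (x - xb)))) xb \<le> ereal \<epsilon>"
      using assms(1) \<open>0 < \<epsilon>\<close> that unfolding plsc_convex_def proper_fun_def
      by (intro perturb_limsup_add_linear_le) auto
  qed
  with \<open>0 < c\<close> \<open>0 < \<epsilon>\<close> show ?thesis
    unfolding linearly_stable_error_bound_def by blast
qed

lemma INF_dir_deriv_neq_0_if_linearly_stable:
  fixes f :: "'a::euclidean_space \<Rightarrow> ereal"
  assumes "convex_fun f" and "\<And>x. f x \<noteq> -\<infinity>" and "f xb = 0"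
    and "linearly_stable_error_bound f xb"
  shows "(INF h\<in>{h. norm h = 1}. dir_deriv f xb h) \<noteq> 0"
proof
  assume INF_0: "(INF h\<in>{h. norm h = 1}. dir_deriv f xb h) = 0"
  obtain c \<epsilon> where "0 < c" "0 < \<epsilon>" and stable: "\<And>u::'a. norm u \<le> 1 \<Longrightarrow>
      tau_min (\<lambda>x. f x + ereal (\<epsilon> * (u \<bullet> (x - xb)))) xb \<le> ereal c"
    using assms(4) unfolding linearly_stable_error_bound_def by blast
  have nonneg: "0 \<le> f x" for x
    using convex_fun_ge_if_INF_dir_deriv_ge[OF assms(1-3), of 0] INF_0 by (simp add: zero_ereal_def)
  define \<theta> where "\<theta> = 1 / (4 * c)"
  define \<eta> where "\<eta> = min 1 (1 / (4 * c * \<epsilon>))"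
  have "0 < \<eta>" "\<eta> \<le> 1" "\<epsilon> * \<eta> \<le> 1 / (4 * c)"
    using \<open>0 < c\<close> \<open>0 < \<epsilon>\<close> by (auto simp: \<eta>_def min_def field_simps)
  have "(INF h\<in>{h. norm h = 1}. dir_deriv f xb h) < ereal \<theta>"
    using INF_0 \<open>0 < c\<close> by (simp add: \<theta>_def)
  then obtain h where "norm h = 1" and "dir_deriv f xb h < ereal \<theta>"
    by (auto simp: INF_less_iff)
  then have flat: "\<forall>\<^sub>F t in at_right 0. f (xb + t *\<^sub>R h) < ereal (\<theta> * t)"
    by (intro eventually_below_ray_if_dir_deriv_less[OF assms(1-3)])
  have "ereal (1 / (\<theta> + \<epsilon> * \<eta>)) \<le> tau_min (\<lambda>x. f x + ereal (\<epsilon> * ((\<eta> *\<^sub>R h) \<bullet> (x - xb)))) xb"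
    by (rule tau_min_tilted_ge[OF assms(3) nonneg \<open>norm h = 1\<close> \<open>0 < \<epsilon>\<close> \<open>0 < \<eta>\<close> flat])
  also have "\<dots> \<le> ereal c"
    using \<open>norm h = 1\<close> \<open>\<eta> \<le> 1\<close> \<open>0 < \<eta>\<close> by (intro stable) simp
  finally have "1 / (\<theta> + \<epsilon> * \<eta>) \<le> c"
    by simp
  moreover have "2 * c \<le> 1 / (\<theta> + \<epsilon> * \<eta>)"
  proof -
    have "0 < \<theta> + \<epsilon> * \<eta>" "\<theta> + \<epsilon> * \<eta> \<le> 1 / (2 * c)"
      using \<open>0 < c\<close> \<open>0 < \<epsilon>\<close> \<open>0 < \<eta>\<close> \<open>\<epsilon> * \<eta> \<le> 1 / (4 * c)\<close>
      by (simp_all add: \<theta>_def add_pos_pos)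
    with \<open>0 < c\<close> show ?thesis
      by (simp add: field_simps)
  qed
  ultimately show False
    using \<open>0 < c\<close> by linarith
qed

theorem theorem5:
  fixes f :: "'a::euclidean_space \<Rightarrow> ereal" and xb :: 'a
  assumes "plsc_convex f" and "f xb = 0"
  shows "((INF h\<in>{h. norm h = 1}. dir_deriv f xb h) \<noteq> 0
          \<longleftrightarrow> (\<exists>c>0. \<exists>\<epsilon>>0. \<forall>g. plsc_convex g \<and> xb \<in> Sset g
                 \<and> perturb_limsup f g xb \<le> ereal \<epsilon> \<longrightarrow> tau_min g xb \<le> ereal c))
       \<and> ((\<exists>c>0. \<exists>\<epsilon>>0. \<forall>g. plsc_convex g \<and> xb \<in> Sset g
                 \<and> perturb_limsup f g xb \<le> ereal \<epsilon> \<longrightarrow> tau_min g xb \<le> ereal c)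
          \<longleftrightarrow> (\<exists>c>0. \<exists>\<epsilon>>0. \<forall>u::'a. norm u \<le> 1 \<longrightarrow>
                 tau_min (\<lambda>x. f x + ereal (\<epsilon> * (u \<bullet> (x - xb)))) xb \<le> ereal c))"
proof -
  have "convex_fun f" and "\<And>x. f x \<noteq> -\<infinity>"
    using assms(1) unfolding plsc_convex_def proper_fun_def by auto
  note convex_f = this assms(2)
  have "(INF h\<in>{h. norm h = 1}. dir_deriv f xb h) \<noteq> 0 \<Longrightarrow> stable_error_bound f xb"
    using stable_error_bound_if_INF_dir_deriv_pos[OF convex_f]
      stable_error_bound_if_INF_dir_deriv_neg[OF convex_f] by fastforce
  moreover have "stable_error_bound f xb \<Longrightarrow> linearly_stable_error_bound f xb"
    by (rule linearly_stable_error_bound_if_stable[OF assms])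
  moreover have "linearly_stable_error_bound f xb \<Longrightarrow> (INF h\<in>{h. norm h = 1}. dir_deriv f xb h) \<noteq> 0"
    by (rule INF_dir_deriv_neq_0_if_linearly_stable[OF convex_f])
  ultimately show ?thesis
    unfolding stable_error_bound_def linearly_stable_error_bound_def by blast
qed

end
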